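(* Let $S$ be a numerical semigroup with minimal generators $e<a_1<\dots<a_t$ and blowup $B$. Let $f\in\operatorname{Ap}(B;e)$, $s=f+\min{\rm ord}(f;B^{\mathcal D})e$ and $s'=f+{\rm ord}(f;B^{\mathcal D})e$. Then $s,s'\in S$, and for all integers $k\ge0$: (1) ${\rm adj}(s+ke)=f$; (2) ${\rm d}_{\max}(s'+ke;S)=d(f;B^{\mathcal D})$.
   Context: A numerical semigroup is a submonoid of $(\mathbb N,+)$ with finite complement. An $S$-factorization of $n$ is $(c_0,\dots,c_t)\in\mathbb N^{t+1}$ with $c_0e+\sum c_ia_i=n$, of length $\sum c_i$. ${\rm ord}(n;S)$ is the maximal such length, and ${\rm d}_{\max}(n;S)$ is the number of factorizations of that length. Let $d_i=a_i-e$, let $B=\langle e,d_1,\dots,d_t\rangle$ be the blowup, and $\mathcal D=(e,d_1,\dots,d_t)$. A $B^{\mathcal D}$-factorization of $b\in B$ is $(x_0,\dots,x_t)\in\mathbb N^{t+1}$ with $x_0e+\sum x_id_i=b$, of length $\sum x_i$. $\min{\rm ord}(b;B^{\mathcal D})$ and ${\rm ord}(b;B^{\mathcal D})$ are the minimal and maximal lengths of such factorizations, and $d(b;B^{\mathcal D})$ is their number. $\operatorname{Ap}(B;e)=\{w\in B:w-e\notin B\}$. The adjustment is ${\rm adj}(u)=u-{\rm ord}(u;S)e$ for $u\in S$. *)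

theory Defs
  imports Main
begin

definition numerical_semigroup :: "nat set \<Rightarrow> bool" where
  "numerical_semigroup S \<longleftrightarrow> 0 \<in> S \<and> (\<forall>x\<in>S. \<forall>y\<in>S. x + y \<in> S) \<and> finite (UNIV - S)"

definition minimal_generators :: "nat set \<Rightarrow> nat set" where
  "minimal_generators S = {x \<in> S. x \<noteq> 0 \<and> \<not> (\<exists>y\<in>S. \<exists>z\<in>S. y \<noteq> 0 \<and> z \<noteq> 0 \<and> x = y + z)}"

definition factorizations :: "nat list \<Rightarrow> nat \<Rightarrow> nat list set" where
  "factorizations gs n = {c. length c = length gs \<and> (\<Sum>i<length gs. c ! i * gs ! i) = n}"

definition fact_len :: "nat list \<Rightarrow> nat" where
  "fact_len c = sum_list c"

definition gen_monoid :: "nat list \<Rightarrow> nat set" where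
  "gen_monoid gs = {n. factorizations gs n \<noteq> {}}"

definition ord_len :: "nat list \<Rightarrow> nat \<Rightarrow> nat" where
  "ord_len gs n = Max (fact_len ` factorizations gs n)"

definition min_ord_len :: "nat list \<Rightarrow> nat \<Rightarrow> nat" where
  "min_ord_len gs n = Min (fact_len ` factorizations gs n)"

definition num_fact :: "nat list \<Rightarrow> nat \<Rightarrow> nat" where
  "num_fact gs n = card (factorizations gs n)"

definition d_max :: "nat list \<Rightarrow> nat \<Rightarrow> nat" where
  "d_max gs n = card {c \<in> factorizations gs n. fact_len c = ord_len gs n}"

(* Apery set Ap(B;e) = {w in B. w - e notin B} (subtraction in the integers) *)
definition apery :: "nat set \<Rightarrow> nat \<Rightarrow> nat set" where
  "apery B e = {w \<in> B. \<not> (e \<le> w \<and> w - e \<in> B)}"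

(* Generator tuple (e, a_1, ..., a_t) of S and blowup tuple D = (e, a_1 - e, ..., a_t - e) *)
definition S_gens :: "nat \<Rightarrow> nat list \<Rightarrow> nat list" where
  "S_gens e as = e # as"

definition D_gens :: "nat \<Rightarrow> nat list \<Rightarrow> nat list" where
  "D_gens e as = e # map (\<lambda>x. x - e) as"

definition adj :: "nat \<Rightarrow> nat list \<Rightarrow> nat \<Rightarrow> int" where
  "adj e as u = int u - int (ord_len (S_gens e as) u) * int e"

end

theory Submission
  imports Defs
begin

text \<open>Since \<open>a\<^sub>i = d\<^sub>i + e\<close>, an \<open>S\<close>-factorization \<open>(c\<^sub>0, c)\<close> of \<open>n\<close> is the same thing as the
  \<open>B\<^sup>\<D>\<close>-factorization \<open>(c\<^sub>0 + \<Sum>c\<^sub>i, c)\<close> of \<open>n\<close>, whose first coordinate is the length of the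
  \<open>S\<close>-factorization. For \<open>f \<in> Ap(B;e)\<close> the first coordinate of a \<open>B\<^sup>\<D>\<close>-factorization of
  \<open>f + N e\<close> is at most \<open>N\<close>, with equality exactly when removing \<open>N e\<close> leaves a
  factorization of \<open>f\<close>. Hence once \<open>N\<close> bounds the lengths of the factorizations of \<open>f\<close>,
  \<open>ord(f + N e; S) = N\<close> and the maximal-length factorizations of \<open>f + N e\<close> correspond
  bijectively to the \<open>B\<^sup>\<D>\<close>-factorizations of \<open>f\<close>.\<close>

lemma factorizations_Cons_iff:
  "c # cs \<in> factorizations (g # gs) n \<longleftrightarrow>
     length cs = length gs \<and> c * g + (\<Sum>i<length gs. cs ! i * gs ! i) = n"
  unfolding factorizations_def
  by (simp only: length_Cons sum.lessThan_Suc_shift nth_Cons_0 nth_Cons_Suc mem_Collect_eq) auto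

lemma factorizations_Cons_cases:
  assumes "c \<in> factorizations (g # gs) n"
  obtains c0 cs where "c = c0 # cs"
  using assms unfolding factorizations_def by (cases c) auto

lemma factorizations_Cons_add_head:
  "(c + k) # cs \<in> factorizations (g # gs) (n + k * g) \<longleftrightarrow> c # cs \<in> factorizations (g # gs) n"
  unfolding factorizations_Cons_iff by (auto simp: algebra_simps)

lemma finite_factorizations:
  assumes "\<forall>g\<in>set gs. 0 < g"
  shows "finite (factorizations gs n)"
proof -
  have "factorizations gs n \<subseteq> {c. set c \<subseteq> {..n} \<and> length c = length gs}"
  proof
    fix c assume c: "c \<in> factorizations gs n"
    then have len: "length c = length gs" unfolding factorizations_def by simp
    have "set c \<subseteq> {..n}"
    proof
      fix x assume "x \<in> set c"
      then obtain i where i: "i < length gs" "c ! i = x"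
        using len by (auto simp: in_set_conv_nth)
      have "0 < gs ! i" using assms i by simp
      then have "x \<le> c ! i * gs ! i" using i(2) by simp
      also have "\<dots> \<le> (\<Sum>j<length gs. c ! j * gs ! j)"
        by (rule member_le_sum) (use i in auto)
      also have "\<dots> = n" using c unfolding factorizations_def by simp
      finally show "x \<in> {..n}" by simp
    qed
    with len show "c \<in> {c. set c \<subseteq> {..n} \<and> length c = length gs}" by simp
  qed
  moreover have "finite {c. set c \<subseteq> {..n} \<and> length c = length gs}"
    by (rule finite_lists_length_eq) simp
  ultimately show ?thesis by (rule finite_subset)
qed

lemma gen_monoid_subset:
  assumes "0 \<in> S" and "\<forall>x\<in>S. \<forall>y\<in>S. x + y \<in> S" and "set gs \<subseteq> S"
  shows "gen_monoid gs \<subseteq> S"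
proof
  have mult_in: "k * a \<in> S" if "a \<in> S" for k a
    by (induction k) (use assms(1,2) that in auto)
  fix n assume "n \<in> gen_monoid gs"
  then obtain c where c: "c \<in> factorizations gs n" unfolding gen_monoid_def by blast
  have term_in: "c ! i * gs ! i \<in> S" if "i < length gs" for i
    using mult_in assms(3) nth_mem[OF that] by blast
  have "(\<Sum>i\<in>I. c ! i * gs ! i) \<in> S" if "I \<subseteq> {..<length gs}" for I
    using finite_subset[OF that finite_lessThan] that
  proof (induction I rule: finite_induct)
    case (insert i I)
    then show ?case using assms(2) term_in by simp
  qed (simp add: assms(1))
  from this[of "{..<length gs}"] show "n \<in> S" using c unfolding factorizations_def by simp
qed

lemma minimal_generators_pos: "x \<in> minimal_generators S \<Longrightarrow> 0 < x"
  unfolding minimal_generators_def by simp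

lemma gen_monoid_minimal_generators_subset:
  assumes "numerical_semigroup S" and "set gs \<subseteq> minimal_generators S"
  shows "gen_monoid gs \<subseteq> S"
proof (rule gen_monoid_subset)
  show "0 \<in> S" "\<forall>x\<in>S. \<forall>y\<in>S. x + y \<in> S"
    using assms(1) unfolding numerical_semigroup_def by blast+
  show "set gs \<subseteq> S" using assms(2) unfolding minimal_generators_def by blast
qed

lemma finite_factorizations_D_gens:
  assumes "0 < e" and "sorted_wrt (<) (e # as)"
  shows "finite (factorizations (D_gens e as) n)"
  using assms by (intro finite_factorizations) (simp add: D_gens_def)

lemma factorizations_blowup_iff:
  assumes "\<forall>a\<in>set as. e \<le> a"
  shows "c # cs \<in> factorizations (S_gens e as) n \<longleftrightarrow>
         (c + sum_list cs) # cs \<in> factorizations (D_gens e as) n"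
proof (cases "length cs = length as")
  case True
  have "(\<Sum>i<length as. cs ! i * as ! i)
      = (\<Sum>i<length as. cs ! i * (as ! i - e) + cs ! i * e)"
    by (rule sum.cong) (use assms in \<open>auto simp: nat_distrib\<close>)
  also have "\<dots> = (\<Sum>i<length as. cs ! i * map (\<lambda>x. x - e) as ! i) + sum_list cs * e"
    using True by (simp add: sum.distrib sum_distrib_right sum_list_sum_nth atLeast0LessThan)
  finally show ?thesis
    unfolding S_gens_def D_gens_def factorizations_Cons_iff by (simp add: algebra_simps)
qed (simp add: S_gens_def D_gens_def factorizations_Cons_iff)

lemma apery_factorization_head_le:
  assumes "f \<in> apery (gen_monoid (g # gs)) g"
    and "c # cs \<in> factorizations (g # gs) (f + N * g)"
  shows "c \<le> N"
proof (rule ccontr)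
  assume "\<not> c \<le> N"
  define d where "d = c - Suc N"
  with \<open>\<not> c \<le> N\<close> have c: "c = d + Suc N" by simp
  have "(d + Suc N) * g + (\<Sum>i<length gs. cs ! i * gs ! i) = f + N * g"
    using assms(2) unfolding c factorizations_Cons_iff by blast
  then have "g \<le> f" by (simp add: add_mult_distrib)
  then have "(f - g) + Suc N * g = f + N * g" by simp
  then have "(d + Suc N) # cs \<in> factorizations (g # gs) ((f - g) + Suc N * g)"
    using assms(2) unfolding c by simp
  then have "f - g \<in> gen_monoid (g # gs)"
    unfolding factorizations_Cons_add_head gen_monoid_def by blast
  then show False using assms(1) \<open>g \<le> f\<close> unfolding apery_def by blast
qed

lemma apery_factorization_head_zero:
  assumes "f \<in> apery (gen_monoid (g # gs)) g" and "x \<in> factorizations (g # gs) f"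
  shows "x = 0 # tl x"
proof -
  obtain c cs where x: "x = c # cs" using assms(2) by (rule factorizations_Cons_cases)
  have "c \<le> 0"
    by (rule apery_factorization_head_le[OF assms(1)]) (use assms(2) x in simp)
  then show ?thesis using x by simp
qed

context
  fixes e :: nat and as :: "nat list" and f :: nat
  assumes apery: "f \<in> apery (gen_monoid (D_gens e as)) e"
    and generators_ge: "\<forall>a\<in>set as. e \<le> a"
begin

lemma fact_len_le_of_apery_shift:
  assumes "c \<in> factorizations (S_gens e as) (f + N * e)"
  shows "fact_len c \<le> N"
proof -
  obtain c0 cs where c: "c = c0 # cs"
    using assms unfolding S_gens_def by (rule factorizations_Cons_cases)
  have "(c0 + sum_list cs) # cs \<in> factorizations (e # map (\<lambda>x. x - e) as) (f + N * e)"
    using assms c factorizations_blowup_iff[OF generators_ge] by (simp add: D_gens_def)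
  then have "c0 + sum_list cs \<le> N"
    by (rule apery_factorization_head_le[OF apery[unfolded D_gens_def]])
  then show ?thesis using c by (simp add: fact_len_def)
qed

lemma max_length_factorizations_of_apery_shift:
  "c \<in> factorizations (S_gens e as) (f + N * e) \<and> fact_len c = N \<longleftrightarrow>
   (\<exists>x\<in>factorizations (D_gens e as) f. fact_len x \<le> N \<and> c = (N - fact_len x) # tl x)"
proof
  assume "c \<in> factorizations (S_gens e as) (f + N * e) \<and> fact_len c = N"
  then have c_fact: "c \<in> factorizations (S_gens e as) (f + N * e)" and "fact_len c = N"
    by auto
  obtain c0 cs where c: "c = c0 # cs"
    using c_fact unfolding S_gens_def by (rule factorizations_Cons_cases)
  with \<open>fact_len c = N\<close> have len: "c0 + sum_list cs = N" by (simp add: fact_len_def)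
  with c_fact c have "(0 + N) # cs \<in> factorizations (D_gens e as) (f + N * e)"
    using factorizations_blowup_iff[OF generators_ge] by simp
  then have "0 # cs \<in> factorizations (D_gens e as) f"
    unfolding D_gens_def factorizations_Cons_add_head .
  moreover have "fact_len (0 # cs) \<le> N" and "c = (N - fact_len (0 # cs)) # tl (0 # cs)"
    using c len by (simp_all add: fact_len_def)
  ultimately show "\<exists>x\<in>factorizations (D_gens e as) f. fact_len x \<le> N \<and> c = (N - fact_len x) # tl x"
    by blast
next
  assume "\<exists>x\<in>factorizations (D_gens e as) f. fact_len x \<le> N \<and> c = (N - fact_len x) # tl x"
  then obtain x where x: "x \<in> factorizations (D_gens e as) f" "fact_len x \<le> N"
    and c: "c = (N - fact_len x) # tl x" by blast
  have x0: "x = 0 # tl x"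
    using apery_factorization_head_zero apery x(1) unfolding D_gens_def by blast
  have "(0 + N) # tl x \<in> factorizations (D_gens e as) (f + N * e)"
    using x(1) x0 unfolding D_gens_def factorizations_Cons_add_head by simp
  moreover have "N - fact_len x + sum_list (tl x) = N"
    using x(2) x0 by (metis fact_len_def le_add_diff_inverse2 plus_nat.add_0 sum_list.Cons)
  ultimately show "c \<in> factorizations (S_gens e as) (f + N * e) \<and> fact_len c = N"
    using factorizations_blowup_iff[OF generators_ge] c by (simp add: fact_len_def)
qed

lemma apery_shift_in_gen_monoid:
  assumes "x \<in> factorizations (D_gens e as) f" and "fact_len x \<le> N"
  shows "f + N * e \<in> gen_monoid (S_gens e as)"
  using max_length_factorizations_of_apery_shift[of "(N - fact_len x) # tl x" N] assms
  unfolding gen_monoid_def by blast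

lemma ord_len_of_apery_shift:
  assumes "x \<in> factorizations (D_gens e as) f" and "fact_len x \<le> N"
  shows "ord_len (S_gens e as) (f + N * e) = N"
  unfolding ord_len_def
proof (rule Max_eqI)
  show "finite (fact_len ` factorizations (S_gens e as) (f + N * e))"
    by (rule finite_subset[of _ "{..N}"]) (auto dest: fact_len_le_of_apery_shift)
  show "y \<le> N" if "y \<in> fact_len ` factorizations (S_gens e as) (f + N * e)" for y
    using that by (auto dest: fact_len_le_of_apery_shift)
  show "N \<in> fact_len ` factorizations (S_gens e as) (f + N * e)"
    using max_length_factorizations_of_apery_shift[of "(N - fact_len x) # tl x" N] assms
    by (metis image_eqI)
qed

lemma d_max_of_apery_shift:
  assumes "factorizations (D_gens e as) f \<noteq> {}"
    and "\<forall>x\<in>factorizations (D_gens e as) f. fact_len x \<le> N"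
  shows "d_max (S_gens e as) (f + N * e) = num_fact (D_gens e as) f"
proof -
  define F where "F = factorizations (D_gens e as) f"
  define lift where "lift x = (N - fact_len x) # tl x" for x
  have "ord_len (S_gens e as) (f + N * e) = N"
    using assms ord_len_of_apery_shift by blast
  then have "{c \<in> factorizations (S_gens e as) (f + N * e).
               fact_len c = ord_len (S_gens e as) (f + N * e)} = lift ` F"
    using max_length_factorizations_of_apery_shift assms(2)
    unfolding F_def lift_def by auto
  moreover have "inj_on lift F"
  proof
    fix x y assume "x \<in> F" "y \<in> F" "lift x = lift y"
    moreover have "x = 0 # tl x" "y = 0 # tl y"
      using apery_factorization_head_zero apery \<open>x \<in> F\<close> \<open>y \<in> F\<close>
      unfolding F_def D_gens_def by blast+
    ultimately show "x = y" unfolding lift_def by (metis list.sel(3))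
  qed
  ultimately show ?thesis
    unfolding d_max_def num_fact_def F_def[symmetric] by (simp add: card_image)
qed

end

theorem proposition3p4:
  fixes S :: "nat set" and e :: nat and as :: "nat list" and f :: nat
  assumes "numerical_semigroup S"
    and "sorted_wrt (<) (e # as)"
    and "set (e # as) = minimal_generators S"
    and "f \<in> apery (gen_monoid (D_gens e as)) e"
  shows "f + min_ord_len (D_gens e as) f * e \<in> S
       \<and> f + ord_len (D_gens e as) f * e \<in> S
       \<and> (\<forall>k::nat. adj e as (f + min_ord_len (D_gens e as) f * e + k * e) = int f)
       \<and> (\<forall>k::nat. d_max (S_gens e as) (f + ord_len (D_gens e as) f * e + k * e)
                     = num_fact (D_gens e as) f)"
proof -
  define F where "F = factorizations (D_gens e as) f"
  define m where "m = min_ord_len (D_gens e as) f"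
  define M where "M = ord_len (D_gens e as) f"
  have ge: "\<forall>a\<in>set as. e \<le> a" using assms(2) by (simp add: less_imp_le)
  have "finite F"
    unfolding F_def using assms(2,3) minimal_generators_pos
    by (intro finite_factorizations_D_gens) (auto simp del: sorted_wrt.simps)
  have "F \<noteq> {}" using assms(4) unfolding F_def apery_def gen_monoid_def by simp
  have "m \<in> fact_len ` F" "M \<in> fact_len ` F"
    unfolding m_def M_def min_ord_len_def ord_len_def F_def[symmetric]
    using \<open>finite F\<close> \<open>F \<noteq> {}\<close> by (intro Min_in Max_in; simp)+
  then obtain xm xM where xm: "xm \<in> F" "fact_len xm = m" and xM: "xM \<in> F" "fact_len xM = M"
    by blast
  have M_ge: "\<forall>x\<in>F. fact_len x \<le> M"
    using \<open>finite F\<close> unfolding M_def ord_len_def F_def[symmetric] by simp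
  have shift: "f + n * e + k * e = f + (n + k) * e" for n k :: nat
    by (simp add: add_mult_distrib)
  have "gen_monoid (S_gens e as) \<subseteq> S"
    using gen_monoid_minimal_generators_subset[OF assms(1)] assms(3) unfolding S_gens_def by simp
  then have "f + m * e \<in> S" "f + M * e \<in> S"
    using apery_shift_in_gen_monoid[OF assms(4) ge _ order_refl] xm xM unfolding F_def by auto
  moreover have "adj e as (f + m * e + k * e) = int f" for k
    using ord_len_of_apery_shift[OF assms(4) ge, of xm "m + k"] xm
    unfolding adj_def shift F_def by simp
  moreover have "d_max (S_gens e as) (f + M * e + k * e) = num_fact (D_gens e as) f" for k
    using d_max_of_apery_shift[OF assms(4) ge, of "M + k"] \<open>F \<noteq> {}\<close> M_ge
    unfolding shift F_def by (simp add: trans_le_add1)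
  ultimately show ?thesis unfolding m_def M_def by blast
qed

end
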